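(* Let $f:[0,\infty)\to[0,\infty)$ be continuously differentiable with $f>0$ on $[t_0,\infty)$ for some $t_0\ge0$ and $f\in C^2([t_0,\infty))$, let $g=\log f$ on $[t_0,\infty)$, and assume condition (H1) of the context with the pair $(q,p)$. Then $\frac1p+\frac1q=1$, where $1/\infty=0$.
   Context: Condition (H1): (i) $g'(t)>0$ and $g''(t)>0$ for all $t\ge t_0$, and there is a pair $(q,p)$ with either $q=1$ and $p\in(0,\infty]$, or $q\in(1,\infty)$ and $p\in(0,\infty)$, such that $\lim_{t\to\infty}\frac{g'(t)^2}{g(t)g''(t)}=q$ and $\lim_{t\to\infty}\frac{tg'(t)}{g(t)}=p$; (ii) if $q=1$, then $tg'(t)/g(t)$ is nondecreasing on $[t_0,\infty)$ and there exist $k\in\mathbb{N}$ and $\hat g\in C^2([t_0,\infty))$ with $f=\exp_k\circ\hat g$ and $\hat g'/\hat g$ nonincreasing on $[t_0,\infty)$ ($\exp_1=\exp$, $\exp_k=\exp_{k-1}\circ\exp$). *)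

theory Defs
  imports "HOL-Analysis.Analysis"
begin

end

theory Submission
  imports Defs
begin

text \<open>With \<open>g = ln f\<close>, the quotient \<open>g / g'\<close> has derivative \<open>1 - g g'' / g'\<^sup>2\<close>, which tends to
  \<open>1 - 1/q\<close>. By l'Hopital's rule \<open>g / (t g')\<close> has the same limit, while by definition of \<open>p\<close>
  it tends to \<open>1/p\<close>.\<close>

lemma lhospital_div_ident_at_top:
  fixes h h' :: "real \<Rightarrow> real"
  assumes "eventually (\<lambda>t. (h has_real_derivative h' t) (at t)) at_top"
    and "(h' \<longlongrightarrow> L) at_top"
  shows "((\<lambda>t. h t / t) \<longlongrightarrow> L) at_top"
  using assms
  by (intro lhospital_at_top_at_top[OF filterlim_ident, where g' = "\<lambda>_. 1"])
     (auto intro!: derivative_eq_intros)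

lemma has_real_derivative_div_deriv:
  fixes g g1 g2 :: "real \<Rightarrow> real"
  assumes "(g has_real_derivative g1 t) (at t)" "(g1 has_real_derivative g2 t) (at t)"
    and "g1 t \<noteq> 0"
  shows "((\<lambda>s. g s / g1 s) has_real_derivative 1 - g t * g2 t / (g1 t)\<^sup>2) (at t)"
  using DERIV_divide[OF assms] assms(3)
  by (simp add: field_simps power2_eq_square)

lemma tendsto_div_mult_deriv_at_top:
  fixes g g1 g2 :: "real \<Rightarrow> real"
  assumes g1: "\<And>t. t \<ge> a \<Longrightarrow> (g has_real_derivative g1 t) (at t within {a..})"
    and g2: "\<And>t. t \<ge> a \<Longrightarrow> (g1 has_real_derivative g2 t) (at t within {a..})"
    and g1_nz: "\<And>t. t \<ge> a \<Longrightarrow> g1 t \<noteq> 0"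
    and lim: "((\<lambda>t. (g1 t)\<^sup>2 / (g t * g2 t)) \<longlongrightarrow> q) at_top" and "q \<noteq> 0"
  shows "((\<lambda>t. g t / (t * g1 t)) \<longlongrightarrow> 1 - 1 / q) at_top"
proof -
  have "eventually (\<lambda>t. ((\<lambda>s. g s / g1 s) has_real_derivative 1 - g t * g2 t / (g1 t)\<^sup>2) (at t))
          at_top"
    using eventually_gt_at_top[of a]
  proof eventually_elim
    case (elim t)
    then have "at t within {a..} = at t"
      by (intro at_within_interior) auto
    with elim g1[of t] g2[of t] g1_nz[of t] show ?case
      by (intro has_real_derivative_div_deriv) auto
  qed
  \<comment> \<open>no sign condition on \<open>g\<close> is needed, since \<open>1 / (x / y) = y / x\<close> holds even for \<open>x = 0\<close> or \<open>y = 0\<close>\<close>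
  moreover have "((\<lambda>t. 1 - g t * g2 t / (g1 t)\<^sup>2) \<longlongrightarrow> 1 - 1 / q) at_top"
    using tendsto_diff[OF tendsto_const tendsto_inverse_real[OF lim \<open>q \<noteq> 0\<close>]] by simp
  ultimately have "((\<lambda>t. g t / g1 t / t) \<longlongrightarrow> 1 - 1 / q) at_top"
    by (rule lhospital_div_ident_at_top)
  then show ?thesis
    by (simp add: field_simps)
qed

theorem lemma2p2:
  fixes f :: "real \<Rightarrow> real" and t0 q :: real and p :: ereal
    and g1 g2 :: "real \<Rightarrow> real"
  assumes t0: "t0 \<ge> 0"
    and f_C1: "\<exists>f'. (\<forall>t\<ge>0. (f has_real_derivative f' t) (at t within {0..}))
                     \<and> continuous_on {0..} f'"
    and f_nonneg: "\<forall>t\<ge>0. f t \<ge> 0"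
    and f_pos: "\<forall>t\<ge>t0. f t > 0"
    and g1: "\<forall>t\<ge>t0. ((\<lambda>s. ln (f s)) has_real_derivative g1 t) (at t within {t0..})"
    and g2: "\<forall>t\<ge>t0. (g1 has_real_derivative g2 t) (at t within {t0..})"
    and g2_cont: "continuous_on {t0..} g2"
    and H1_sign: "\<forall>t\<ge>t0. g1 t > 0 \<and> g2 t > 0"
    and H1_qp: "(q = 1 \<and> p > 0) \<or> (q > 1 \<and> 0 < p \<and> p < \<infinity>)"
    and H1_limq: "((\<lambda>t. (g1 t)\<^sup>2 / (ln (f t) * g2 t)) \<longlongrightarrow> q) at_top"
    and H1_limp: "((\<lambda>t. ereal (t * g1 t / ln (f t))) \<longlongrightarrow> p) at_top"
    and H1_ii: "q = 1 \<longrightarrow>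
        (mono_on {t0..} (\<lambda>t. t * g1 t / ln (f t)) \<and>
         (\<exists>(k::nat) h h1 h2. k \<ge> 1
            \<and> (\<forall>t\<ge>t0. (h has_real_derivative h1 t) (at t within {t0..}))
            \<and> (\<forall>t\<ge>t0. (h1 has_real_derivative h2 t) (at t within {t0..}))
            \<and> continuous_on {t0..} h2
            \<and> (\<forall>t\<ge>t0. f t = (exp ^^ k) (h t))
            \<and> (\<forall>s t. t0 \<le> s \<and> s \<le> t \<longrightarrow> h1 t / h t \<le> h1 s / h s)))"
  shows "1 / p + 1 / ereal q = 1"
proof -
  have "q \<noteq> 0" "p > 0"
    using H1_qp by auto
  have "((\<lambda>t. ln (f t) / (t * g1 t)) \<longlongrightarrow> 1 - 1 / q) at_top"
    using g1 g2 H1_sign H1_limq \<open>q \<noteq> 0\<close>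
    by (intro tendsto_div_mult_deriv_at_top[where a = t0]) auto
  then have lim_q: "((\<lambda>t. ereal (ln (f t) / (t * g1 t))) \<longlongrightarrow> ereal (1 - 1 / q)) at_top"
    by (rule tendsto_ereal)
  have "eventually (\<lambda>t. ereal (t * g1 t / ln (f t)) > 0) at_top"
    using order_tendstoD(1)[OF H1_limp \<open>p > 0\<close>] by simp
  then have "eventually (\<lambda>t. 1 / ereal (t * g1 t / ln (f t)) = ereal (ln (f t) / (t * g1 t))) at_top"
  proof eventually_elim
    case (elim t)
    then have "t * g1 t / ln (f t) \<noteq> 0"
      by auto
    then show ?case
      by (simp add: one_ereal_def)
  qed
  moreover have "((\<lambda>t. 1 / ereal (t * g1 t / ln (f t))) \<longlongrightarrow> 1 / p) at_top"
    using H1_limp \<open>p > 0\<close> by (intro tendsto_inverse_ereal) auto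
  ultimately have "((\<lambda>t. ereal (ln (f t) / (t * g1 t))) \<longlongrightarrow> 1 / p) at_top"
    by (rule Lim_transform_eventually[rotated])
  with lim_q have "1 / p = ereal (1 - 1 / q)"
    by (intro tendsto_unique[OF trivial_limit_at_top_linorder])
  with \<open>q \<noteq> 0\<close> show ?thesis
    by (simp add: one_ereal_def)
qed

end
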